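(* Let $\alpha>0$. Let $u_0:\mathbb{R}\to[0,1]$ be uniformly continuous with $u_0>0$ on $\mathbb{R}$, $\liminf_{x\to-\infty}u_0>0$, $\lim_{x\to+\infty}u_0=0$, of class $C^2$ and nonincreasing on $[\xi_0,+\infty)$ for some $\xi_0>0$, and such that $\varphi_0:=-\ln u_0$ satisfies $\varphi_0'=o(\varphi_0^{-\alpha})$ and $\varphi_0''=o(\varphi_0')$ as $x\to+\infty$. Let $\rho>0$ and define $$w(t,x):=\exp\Big\{1-\big[(1+\varphi_0(x))^{\alpha+1}-\rho(\alpha+1)t\big]^{\frac{1}{\alpha+1}}\Big\},\qquad x_0(t):=\sup\Big\{x\in\mathbb{R}: u_0(x)=\exp\big(1-(\rho(\alpha+1)t+1)^{\frac{1}{\alpha+1}}\big)\Big\}.$$ Then for any small $\varepsilon>0$ there exists $t^\#>0$, depending on $\varepsilon$, such that $$|w_{xx}(t,x)|<\varepsilon\frac{w(t,x)}{(1-\ln w(t,x))^\alpha}\quad\text{for all } x\ge x_0(t)\text{ and } t\ge t^\#.$$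
   Context: $w$ solves $w_t=\rho\, w/(1-\ln w)^\alpha$ with $w(0,\cdot)=u_0$; one has $w(t,x_0(t))=1$ and $0<w(t,x)\le1$ for $x\ge x_0(t)$. *)

theory Defs
  imports "HOL-Analysis.Analysis" "HOL-Library.Landau_Symbols"
begin

definition wfun :: "real \<Rightarrow> real \<Rightarrow> (real \<Rightarrow> real) \<Rightarrow> real \<Rightarrow> real \<Rightarrow> real" where
  "wfun \<alpha> \<rho> u0 t x =
     exp (1 - ((1 + (- ln (u0 x))) powr (\<alpha> + 1) - \<rho> * (\<alpha> + 1) * t) powr (1 / (\<alpha> + 1)))"

definition x0fun :: "real \<Rightarrow> real \<Rightarrow> (real \<Rightarrow> real) \<Rightarrow> real \<Rightarrow> real" where
  "x0fun \<alpha> \<rho> u0 t =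
     Sup {x. u0 x = exp (1 - (\<rho> * (\<alpha> + 1) * t + 1) powr (1 / (\<alpha> + 1)))}"

end

theory Submission
  imports Defs
begin

(* Write phi0 = - ln u0, c = rho (alpha + 1) t and Phi_c s = exp (1 - ((1 + s)^(alpha+1) - c)^(1/(alpha+1))),
   so that w(t,.) = Phi_c o phi0.  Because Phi_c' = - Phi_c (1 + s)^alpha / Lambda^alpha with
   Lambda = 1 - ln Phi_c, the chain rule writes w_xx / (w / (1 - ln w)^alpha) as a combination of
   ((1 + phi0)^alpha phi0')^2, (1 + phi0)^(alpha-1) phi0'^2 and (1 + phi0)^alpha phi0'' whose coefficients
   are bounded by 1 + alpha as soon as Lambda >= 1.  The hypotheses on phi0' and phi0'' make these
   three quantities O(delta) beyond some point X.  For large t the level defining x0(t) drops below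
   u0(X), so x0(t) >= X, and for x >= x0(t) monotonicity gives w <= 1, i.e. Lambda >= 1. *)

lemma deriv_deriv_compose:
  fixes f g f' g' f'' g'' :: "real \<Rightarrow> real"
  assumes "open S" "open T" "x \<in> S" "g x \<in> T"
    and g': "\<And>y. y \<in> S \<Longrightarrow> (g has_real_derivative g' y) (at y)"
    and g'': "(g' has_real_derivative g'' x) (at x)"
    and f': "\<And>s. s \<in> T \<Longrightarrow> (f has_real_derivative f' s) (at s)"
    and f'': "(f' has_real_derivative f'' (g x)) (at (g x))"
  shows "deriv (deriv (\<lambda>y. f (g y))) x = f'' (g x) * (g' x)\<^sup>2 + f' (g x) * g'' x"
proof -
  define S' where "S' = S \<inter> g -` T"
  have "continuous_on S g"
    using g' by (meson DERIV_isCont continuous_at_imp_continuous_on)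
  then have "open S'" "x \<in> S'"
    using assms(1-4) by (auto simp: S'_def intro: continuous_open_preimage)
  have first: "f' (g y) * g' y = deriv (\<lambda>y. f (g y)) y" if "y \<in> S'" for y
    using that by (intro DERIV_imp_deriv[symmetric] DERIV_chain2[OF f' g']) (auto simp: S'_def)
  have "((\<lambda>y. f' (g y) * g' y) has_real_derivative
           f'' (g x) * g' x * g' x + f' (g x) * g'' x) (at x)"
    using DERIV_mult[OF DERIV_chain2[OF f'' g'] g''] assms(3)
    by (simp add: mult.commute[of "g'' x"])
  then have "(deriv (\<lambda>y. f (g y)) has_real_derivative
                f'' (g x) * g' x * g' x + f' (g x) * g'' x) (at x)"
    by (rule has_field_derivative_transform_within_open[OF _ \<open>open S'\<close> \<open>x \<in> S'\<close> first])
  then show ?thesis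
    by (simp add: DERIV_imp_deriv power2_eq_square)
qed

lemma DERIV_deriv_twice:
  fixes f f1 :: "real \<Rightarrow> real"
  assumes "open S" "x \<in> S"
    and "\<And>y. y \<in> S \<Longrightarrow> (f has_real_derivative f1 y) (at y)"
    and "(f1 has_real_derivative f2) (at x)"
  shows "(f has_real_derivative deriv f x) (at x)"
    and "(deriv f has_real_derivative deriv (deriv f) x) (at x)"
proof -
  show "(f has_real_derivative deriv f x) (at x)"
    using assms(2,3) by (metis DERIV_imp_deriv)
  have f2: "(deriv f has_real_derivative f2) (at x)"
    by (rule has_field_derivative_transform_within_open[OF assms(4,1,2)])
       (use assms(3) DERIV_imp_deriv in metis)
  then show "(deriv f has_real_derivative deriv (deriv f) x) (at x)"
    by (simp only: DERIV_imp_deriv[OF f2])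
qed

lemma DERIV_deriv_neg_ln:
  fixes u u1 u2 :: "real \<Rightarrow> real"
  assumes "x \<in> interior S"
    and pos: "\<And>y. y \<in> S \<Longrightarrow> u y > 0"
    and u1: "\<And>y. y \<in> S \<Longrightarrow> (u has_real_derivative u1 y) (at y within S)"
    and u2: "\<And>y. y \<in> S \<Longrightarrow> (u1 has_real_derivative u2 y) (at y within S)"
  shows "((\<lambda>y. - ln (u y)) has_real_derivative deriv (\<lambda>y. - ln (u y)) x) (at x)"
    and "(deriv (\<lambda>y. - ln (u y)) has_real_derivative deriv (deriv (\<lambda>y. - ln (u y))) x) (at x)"
proof -
  have "y \<in> S" "(u has_real_derivative u1 y) (at y)" "(u1 has_real_derivative u2 y) (at y)"
    if "y \<in> interior S" for y
  proof -
    show "y \<in> S" using that interior_subset by blast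
    then show "(u has_real_derivative u1 y) (at y)" "(u1 has_real_derivative u2 y) (at y)"
      using u1 u2 at_within_interior[OF that] by metis+
  qed
  note u' = this
  have d1: "((\<lambda>y. - ln (u y)) has_real_derivative - (u1 y / u y)) (at y)" if "y \<in> interior S" for y
    using DERIV_minus[OF DERIV_chain2[OF DERIV_ln_divide[OF pos] u'(2)]] u'(1) that by simp
  have d2: "((\<lambda>y. - (u1 y / u y)) has_real_derivative
               - ((u2 x * u x - u1 x * u1 x) / (u x * u x))) (at x)"
    using DERIV_minus[OF DERIV_divide[OF u'(3,2)[OF assms(1)]]] pos[OF u'(1)[OF assms(1)]] by simp
  show "((\<lambda>y. - ln (u y)) has_real_derivative deriv (\<lambda>y. - ln (u y)) x) (at x)"
    by (rule DERIV_deriv_twice(1)[OF open_interior assms(1) d1 d2])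
  show "(deriv (\<lambda>y. - ln (u y)) has_real_derivative deriv (deriv (\<lambda>y. - ln (u y))) x) (at x)"
    by (rule DERIV_deriv_twice(2)[OF open_interior assms(1) d1 d2])
qed

lemma eventually_neg_ln_derivatives_small:
  fixes u :: "real \<Rightarrow> real"
  assumes "\<And>x. u x > 0" "(u \<longlongrightarrow> 0) at_top" "\<delta> > 0"
    and "deriv (\<lambda>x. - ln (u x)) \<in> o(\<lambda>x. (- ln (u x)) powr - \<alpha>)"
    and "deriv (deriv (\<lambda>x. - ln (u x))) \<in> o(deriv (\<lambda>x. - ln (u x)))"
  shows "\<forall>\<^sub>F x in at_top. 1 \<le> - ln (u x)
           \<and> \<bar>deriv (\<lambda>x. - ln (u x)) x\<bar> \<le> \<delta> * (- ln (u x)) powr - \<alpha>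
           \<and> \<bar>deriv (deriv (\<lambda>x. - ln (u x))) x\<bar> \<le> \<delta> * \<bar>deriv (\<lambda>x. - ln (u x)) x\<bar>"
  using order_tendstoD(2)[OF assms(2) exp_gt_zero[of "- 1"]]
    landau_o.smallD[OF assms(4,3)] landau_o.smallD[OF assms(5,3)]
proof eventually_elim
  case (elim x)
  have "ln (u x) < - 1"
    using elim(1) assms(1) ln_less_cancel_iff[of "u x" "exp (- 1)"] by simp
  then show ?case
    using elim(2,3) by simp
qed

lemma beyond_Sup_level_set:
  fixes u :: "real \<Rightarrow> real"
  assumes "continuous_on {X..} u" "(u \<longlongrightarrow> 0) at_top"
    and mono: "\<And>y z. X \<le> y \<Longrightarrow> y \<le> z \<Longrightarrow> u z \<le> u y"
    and "0 < L" "L \<le> u X" "Sup {y. u y = L} \<le> x"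
  shows "X \<le> x" "u x \<le> L"
proof -
  obtain N where N: "\<And>y. N \<le> y \<Longrightarrow> u y < L"
    using order_tendstoD(2)[OF assms(2,4)] by (auto simp: eventually_at_top_linorder)
  define b where "b = max N X"
  obtain y0 where y0: "X \<le> y0" "u y0 = L"
    using IVT2'[of u b L X] N[of b] assms(1,5) continuous_on_subset[OF assms(1), of "{X..b}"]
    by (force simp: b_def)
  have "bdd_above {y. u y = L}"
  proof (rule bdd_aboveI)
    show "y \<le> N" if "y \<in> {y. u y = L}" for y
      using that N[of y] by (cases "N \<le> y") auto
  qed
  then have "y0 \<le> x"
    using y0 cSup_upper[of y0 "{y. u y = L}"] assms(6) by auto
  then show "X \<le> x" "u x \<le> L"
    using y0 mono by auto
qed

lemma one_plus_powr_mult_le: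
  fixes \<alpha> s d \<delta> :: real
  assumes "\<alpha> \<ge> 0" "1 \<le> s" "\<bar>d\<bar> \<le> \<delta> * s powr - \<alpha>"
  shows "(1 + s) powr \<alpha> * \<bar>d\<bar> \<le> 2 powr \<alpha> * \<delta>"
proof -
  have "(1 + s) powr \<alpha> \<le> 2 powr \<alpha> * s powr \<alpha>"
    using assms(1,2) powr_mono2[of \<alpha> "1 + s" "2 * s"] by (simp add: powr_mult)
  then have "(1 + s) powr \<alpha> * \<bar>d\<bar> \<le> 2 powr \<alpha> * s powr \<alpha> * (\<delta> * s powr - \<alpha>)"
    using assms(3) by (intro mult_mono) auto
  then show ?thesis
    using assms(2) by (simp add: powr_minus field_simps)
qed

lemma chain_factor_bound:
  fixes \<alpha> s q G d1 d2 \<delta> :: real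
  assumes "\<alpha> > 0" "1 \<le> s" "1 \<le> G" "0 \<le> q" "q \<le> 1"
    and d1: "\<bar>d1\<bar> \<le> \<delta> * s powr - \<alpha>" and d2: "\<bar>d2\<bar> \<le> \<delta> * \<bar>d1\<bar>" and "\<delta> \<le> 1"
  defines "\<theta> \<equiv> (1 + s) powr \<alpha> * \<bar>d1\<bar>"
  shows "\<bar>(q + \<alpha> / G) * \<theta>\<^sup>2 - \<alpha> * \<theta> * \<bar>d1\<bar> / (1 + s) - (1 + s) powr \<alpha> * d2\<bar>
           \<le> \<delta> * ((1 + \<alpha>) * ((2 powr \<alpha>)\<^sup>2 + 2 powr \<alpha>))"
proof -
  have "0 < s powr - \<alpha>" "s powr - \<alpha> \<le> 1"
    using assms(1,2) ge_one_powr_ge_zero[of s \<alpha>] by (auto simp: powr_minus_divide)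
  then have "0 \<le> \<delta>" "\<bar>d1\<bar> \<le> \<delta>"
    using d1 \<open>\<delta> \<le> 1\<close> by (smt (verit) mult_left_le zero_le_mult_iff)+
  have \<theta>: "0 \<le> \<theta>" "\<theta> \<le> 2 powr \<alpha> * \<delta>"
    using one_plus_powr_mult_le[OF _ assms(2) d1] assms(1,2) by (auto simp: \<theta>_def)
  have "(q + \<alpha> / G) * \<theta>\<^sup>2 \<le> (1 + \<alpha>) * ((2 powr \<alpha>)\<^sup>2 * \<delta>)"
  proof (rule mult_mono)
    show "q + \<alpha> / G \<le> 1 + \<alpha>"
      using divide_left_mono[of 1 G \<alpha>] assms(1,3,5) by simp
    have "\<theta>\<^sup>2 \<le> (2 powr \<alpha> * \<delta>)\<^sup>2" using \<theta> by (intro power_mono) auto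
    also have "\<dots> \<le> (2 powr \<alpha>)\<^sup>2 * \<delta>"
      using mult_left_le_one_le[of "2 powr \<alpha> * \<delta>" \<delta>] \<open>0 \<le> \<delta>\<close> \<open>\<delta> \<le> 1\<close>
      by (simp add: power_mult_distrib power2_eq_square)
    finally show "\<theta>\<^sup>2 \<le> (2 powr \<alpha>)\<^sup>2 * \<delta>" .
  qed (use assms(1,3,4) in auto)
  moreover have "\<alpha> * \<theta> * \<bar>d1\<bar> / (1 + s) \<le> \<alpha> * (2 powr \<alpha> * \<delta>)"
  proof -
    have "0 \<le> \<theta> * \<bar>d1\<bar>" using \<theta> by simp
    then have "\<theta> * \<bar>d1\<bar> / (1 + s) \<le> \<theta> * \<bar>d1\<bar>"
      using assms(2) by (simp add: divide_le_eq mult_le_cancel_left1)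
    also have "\<dots> \<le> 2 powr \<alpha> * \<delta> * 1"
      using \<theta> \<open>\<bar>d1\<bar> \<le> \<delta>\<close> \<open>\<delta> \<le> 1\<close> by (intro mult_mono) auto
    finally have "\<alpha> * (\<theta> * \<bar>d1\<bar> / (1 + s)) \<le> \<alpha> * (2 powr \<alpha> * \<delta>)"
      using assms(1) by (intro mult_left_mono) auto
    then show ?thesis by (simp add: mult.assoc)
  qed
  moreover have "\<bar>(1 + s) powr \<alpha> * d2\<bar> \<le> 2 powr \<alpha> * \<delta>"
  proof -
    have "\<bar>(1 + s) powr \<alpha> * d2\<bar> \<le> (1 + s) powr \<alpha> * (\<delta> * \<bar>d1\<bar>)"
      using d2 by (simp add: abs_mult mult_left_mono)
    also have "\<dots> = \<delta> * \<theta>" by (simp add: \<theta>_def)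
    also have "\<dots> \<le> 1 * (2 powr \<alpha> * \<delta>)"
      using \<theta> \<open>0 \<le> \<delta>\<close> \<open>\<delta> \<le> 1\<close> by (intro mult_mono) auto
    finally show ?thesis by simp
  qed
  moreover have "0 \<le> (q + \<alpha> / G) * \<theta>\<^sup>2" "0 \<le> \<alpha> * \<theta> * \<bar>d1\<bar> / (1 + s)"
    using \<theta> assms(1-4) by simp_all
  ultimately show ?thesis
    by (simp add: algebra_simps abs_le_iff)
qed

definition profile_gap :: "real \<Rightarrow> real \<Rightarrow> real \<Rightarrow> real" where
  "profile_gap \<alpha> c s = (1 + s) powr (\<alpha> + 1) - c"

definition profile :: "real \<Rightarrow> real \<Rightarrow> real \<Rightarrow> real" where
  "profile \<alpha> c s = exp (1 - profile_gap \<alpha> c s powr (1 / (\<alpha> + 1)))"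

definition profile_deriv :: "real \<Rightarrow> real \<Rightarrow> real \<Rightarrow> real" where
  "profile_deriv \<alpha> c s =
     - profile \<alpha> c s * profile_gap \<alpha> c s powr (- \<alpha> / (\<alpha> + 1)) * (1 + s) powr \<alpha>"

definition profile_deriv2 :: "real \<Rightarrow> real \<Rightarrow> real \<Rightarrow> real" where
  "profile_deriv2 \<alpha> c s =
     profile \<alpha> c s * profile_gap \<alpha> c s powr (- \<alpha> / (\<alpha> + 1)) *
       ((profile_gap \<alpha> c s powr (- \<alpha> / (\<alpha> + 1)) + \<alpha> / profile_gap \<alpha> c s) * ((1 + s) powr \<alpha>)\<^sup>2
        - \<alpha> * (1 + s) powr (\<alpha> - 1))"

lemma wfun_eq_profile: "wfun \<alpha> \<rho> u0 t x = profile \<alpha> (\<rho> * (\<alpha> + 1) * t) (- ln (u0 x))"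
  by (simp add: wfun_def profile_def profile_gap_def)

lemma profile_pos: "profile \<alpha> c s > 0"
  by (simp add: profile_def)

lemma open_profile_domain: "open {s. 0 < 1 + s \<and> 0 < profile_gap \<alpha> c s}"
proof -
  have "continuous_on {-1<..} (profile_gap \<alpha> c)"
    unfolding profile_gap_def by (intro continuous_intros) auto
  moreover have "{s. 0 < 1 + s \<and> 0 < profile_gap \<alpha> c s} = {-1<..} \<inter> profile_gap \<alpha> c -` {0<..}"
    by auto
  ultimately show ?thesis
    using continuous_open_preimage[OF _ open_greaterThan open_greaterThan] by metis
qed

lemma has_real_derivative_profile_gap:
  assumes "1 + s > 0"
  shows "(profile_gap \<alpha> c has_real_derivative (\<alpha> + 1) * (1 + s) powr \<alpha>) (at s)"
proof -
  have "((\<lambda>s. (1 + s) powr (\<alpha> + 1)) has_real_derivative (\<alpha> + 1) * (1 + s) powr (\<alpha> + 1 - 1) * 1) (at s)"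
    using DERIV_fun_powr[OF DERIV_add[OF DERIV_const DERIV_ident] assms, of "\<alpha> + 1"] by simp
  from DERIV_diff[OF this DERIV_const[of c]] show ?thesis unfolding profile_gap_def by simp
qed

lemma has_real_derivative_profile_gap_powr:
  assumes "1 + s > 0" "profile_gap \<alpha> c s > 0"
  shows "((\<lambda>s. profile_gap \<alpha> c s powr r) has_real_derivative
           r * (\<alpha> + 1) * profile_gap \<alpha> c s powr (r - 1) * (1 + s) powr \<alpha>) (at s)"
  using DERIV_fun_powr[OF has_real_derivative_profile_gap[OF assms(1)] assms(2), of r]
  by (simp add: mult_ac)

lemma has_real_derivative_profile:
  assumes "\<alpha> > 0" "1 + s > 0" "profile_gap \<alpha> c s > 0"
  shows "(profile \<alpha> c has_real_derivative profile_deriv \<alpha> c s) (at s)"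
proof -
  have "1 / (\<alpha> + 1) * (\<alpha> + 1) = 1" "1 / (\<alpha> + 1) - 1 = - \<alpha> / (\<alpha> + 1)"
    using assms(1) by (simp_all add: field_simps)
  with DERIV_fun_exp[OF DERIV_diff[OF DERIV_const[of 1]
         has_real_derivative_profile_gap_powr[OF assms(2,3), of "1 / (\<alpha> + 1)"]]]
  show ?thesis
    unfolding profile_def[abs_def] profile_deriv_def by (simp add: profile_def mult.assoc)
qed

lemma has_real_derivative_profile_deriv:
  assumes "\<alpha> > 0" "1 + s > 0" "profile_gap \<alpha> c s > 0"
  shows "(profile_deriv \<alpha> c has_real_derivative profile_deriv2 \<alpha> c s) (at s)"
proof -
  let ?G = "profile_gap \<alpha> c s" and ?q = "profile_gap \<alpha> c s powr (- \<alpha> / (\<alpha> + 1))"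
  have dq: "((\<lambda>s. profile_gap \<alpha> c s powr (- \<alpha> / (\<alpha> + 1))) has_real_derivative
              - \<alpha> * ?q / ?G * (1 + s) powr \<alpha>) (at s)"
  proof -
    have "- \<alpha> / (\<alpha> + 1) * (\<alpha> + 1) = - \<alpha>" using assms(1) by (simp add: field_simps)
    moreover have "?G powr (- \<alpha> / (\<alpha> + 1) - 1) = ?q / ?G"
      using assms(3) by (simp add: powr_diff)
    ultimately show ?thesis
      using has_real_derivative_profile_gap_powr[OF assms(2,3), of "- \<alpha> / (\<alpha> + 1)"] by simp
  qed
  have dP: "((\<lambda>s. (1 + s) powr \<alpha>) has_real_derivative \<alpha> * (1 + s) powr (\<alpha> - 1)) (at s)"
    using DERIV_fun_powr[OF DERIV_add[OF DERIV_const DERIV_ident] assms(2)] by simp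
  show ?thesis
    unfolding profile_deriv_def[abs_def]
    by (rule DERIV_cong[OF DERIV_mult[OF DERIV_mult[OF DERIV_minus[OF
          has_real_derivative_profile[OF assms]] dq] dP]])
       (simp add: profile_deriv_def profile_deriv2_def algebra_simps power2_eq_square)
qed

lemma profile_over_ln_powr:
  assumes "\<alpha> > 0" "profile_gap \<alpha> c s > 0"
  shows "profile \<alpha> c s / (1 - ln (profile \<alpha> c s)) powr \<alpha>
           = profile \<alpha> c s * profile_gap \<alpha> c s powr (- \<alpha> / (\<alpha> + 1))"
  using assms
  by (simp add: profile_def powr_powr powr_minus divide_inverse mult.commute[of "inverse (\<alpha> + 1)"])

lemma profile_chain_term_eq:
  fixes \<alpha> c s d1 d2 :: real
  assumes "1 + s > 0" "profile_gap \<alpha> c s > 0"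
  defines "q \<equiv> profile_gap \<alpha> c s powr (- \<alpha> / (\<alpha> + 1))"
  defines "\<theta> \<equiv> (1 + s) powr \<alpha> * \<bar>d1\<bar>"
  shows "profile_deriv2 \<alpha> c s * d1\<^sup>2 + profile_deriv \<alpha> c s * d2
       = profile \<alpha> c s * q * ((q + \<alpha> / profile_gap \<alpha> c s) * \<theta>\<^sup>2
                              - \<alpha> * \<theta> * \<bar>d1\<bar> / (1 + s) - (1 + s) powr \<alpha> * d2)"
proof -
  have "(1 + s) powr (\<alpha> - 1) = (1 + s) powr \<alpha> / (1 + s)"
    using assms(1) by (simp add: powr_diff)
  then show ?thesis
    by (simp add: profile_deriv_def profile_deriv2_def q_def \<theta>_def power2_eq_square algebra_simps)
qed

lemma profile_chain_term_bound:
  fixes \<alpha> c s d1 d2 \<delta> \<epsilon> :: real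
  assumes "\<alpha> > 0" "1 \<le> s" "1 \<le> profile_gap \<alpha> c s"
    and "\<bar>d1\<bar> \<le> \<delta> * s powr - \<alpha>" "\<bar>d2\<bar> \<le> \<delta> * \<bar>d1\<bar>" "\<delta> \<le> 1"
    and "\<delta> * ((1 + \<alpha>) * ((2 powr \<alpha>)\<^sup>2 + 2 powr \<alpha>)) < \<epsilon>"
  shows "\<bar>profile_deriv2 \<alpha> c s * d1\<^sup>2 + profile_deriv \<alpha> c s * d2\<bar>
           < \<epsilon> * profile \<alpha> c s / (1 - ln (profile \<alpha> c s)) powr \<alpha>"
proof -
  define q where "q = profile_gap \<alpha> c s powr (- \<alpha> / (\<alpha> + 1))"
  define E where "E = (q + \<alpha> / profile_gap \<alpha> c s) * ((1 + s) powr \<alpha> * \<bar>d1\<bar>)\<^sup>2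
                      - \<alpha> * ((1 + s) powr \<alpha> * \<bar>d1\<bar>) * \<bar>d1\<bar> / (1 + s) - (1 + s) powr \<alpha> * d2"
  have "q \<le> 1 powr (- \<alpha> / (\<alpha> + 1))"
    unfolding q_def using assms(1,3) by (intro powr_mono2') auto
  then have q: "0 < q" "q \<le> 1"
    using assms(3) by (auto simp: q_def)
  have E: "\<bar>E\<bar> < \<epsilon>"
    using chain_factor_bound[OF assms(1,2,3) less_imp_le[OF q(1)] q(2) assms(4-6)] assms(7) unfolding E_def by linarith
  have pos: "0 < profile \<alpha> c s * q" using q by (simp add: profile_pos)
  have "\<bar>profile_deriv2 \<alpha> c s * d1\<^sup>2 + profile_deriv \<alpha> c s * d2\<bar> = profile \<alpha> c s * q * \<bar>E\<bar>"
    using profile_chain_term_eq[of s \<alpha> c d1 d2] assms(2,3) pos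
    by (simp add: E_def q_def abs_mult profile_pos less_imp_le)
  also have "\<dots> < profile \<alpha> c s * q * \<epsilon>"
    using mult_strict_left_mono[OF E pos] .
  also have "\<dots> = \<epsilon> * profile \<alpha> c s / (1 - ln (profile \<alpha> c s)) powr \<alpha>"
    using profile_over_ln_powr[of \<alpha> c s] assms(1,3)
    by (simp add: q_def) (metis mult.commute times_divide_eq_right)
  finally show ?thesis .
qed

lemma profile_comp_deriv_deriv_bound:
  fixes \<phi> :: "real \<Rightarrow> real"
  assumes "\<alpha> > 0" "open S" "x \<in> S"
    and "\<And>y. y \<in> S \<Longrightarrow> (\<phi> has_real_derivative deriv \<phi> y) (at y)"
    and "(deriv \<phi> has_real_derivative deriv (deriv \<phi>) x) (at x)"
    and "1 \<le> \<phi> x" "1 \<le> profile_gap \<alpha> c (\<phi> x)"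
    and "\<bar>deriv \<phi> x\<bar> \<le> \<delta> * \<phi> x powr - \<alpha>" "\<bar>deriv (deriv \<phi>) x\<bar> \<le> \<delta> * \<bar>deriv \<phi> x\<bar>"
    and "\<delta> \<le> 1" "\<delta> * ((1 + \<alpha>) * ((2 powr \<alpha>)\<^sup>2 + 2 powr \<alpha>)) < \<epsilon>"
  shows "\<bar>deriv (deriv (\<lambda>y. profile \<alpha> c (\<phi> y))) x\<bar>
           < \<epsilon> * profile \<alpha> c (\<phi> x) / (1 - ln (profile \<alpha> c (\<phi> x))) powr \<alpha>"
proof -
  have "deriv (deriv (\<lambda>y. profile \<alpha> c (\<phi> y))) x
        = profile_deriv2 \<alpha> c (\<phi> x) * (deriv \<phi> x)\<^sup>2 + profile_deriv \<alpha> c (\<phi> x) * deriv (deriv \<phi>) x"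
    by (rule deriv_deriv_compose[OF assms(2) open_profile_domain assms(3)])
       (use assms in \<open>auto intro: has_real_derivative_profile has_real_derivative_profile_deriv\<close>)
  then show ?thesis
    using profile_chain_term_bound[OF assms(1,6,7,8,9,10,11)] by simp
qed

lemma profile_gap_ge_one:
  assumes "\<alpha> > 0" "0 \<le> c" "0 < u" "u \<le> exp (1 - (c + 1) powr (1 / (\<alpha> + 1)))"
  shows "1 \<le> profile_gap \<alpha> c (- ln u)"
proof -
  have "(c + 1) powr (1 / (\<alpha> + 1)) \<le> 1 - ln u"
    using ln_le_cancel_iff[of u "exp (1 - (c + 1) powr (1 / (\<alpha> + 1)))"] assms(3,4) by simp
  then have "((c + 1) powr (1 / (\<alpha> + 1))) powr (\<alpha> + 1) \<le> (1 - ln u) powr (\<alpha> + 1)"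
    using assms(1) by (intro powr_mono2) auto
  then show ?thesis
    using assms(1,2) by (simp add: profile_gap_def powr_powr)
qed

lemma large_time_beyond_x0fun:
  fixes u0 :: "real \<Rightarrow> real"
  assumes "\<alpha> > 0" "\<rho> > 0" "\<And>x. u0 x > 0"
    and "continuous_on {X..} u0" "(u0 \<longlongrightarrow> 0) at_top"
    and "\<And>y z. X \<le> y \<Longrightarrow> y \<le> z \<Longrightarrow> u0 z \<le> u0 y"
  shows "\<exists>tsh>0. \<forall>t\<ge>tsh. \<forall>x\<ge>x0fun \<alpha> \<rho> u0 t.
           X \<le> x \<and> 1 \<le> profile_gap \<alpha> (\<rho> * (\<alpha> + 1) * t) (- ln (u0 x))"
proof -
  define K where "K = max 1 (1 - ln (u0 X))"
  define tsh where "tsh = K powr (\<alpha> + 1) / (\<rho> * (\<alpha> + 1))"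
  have "tsh > 0" using assms(1,2) by (simp add: tsh_def K_def)
  moreover have "X \<le> x \<and> 1 \<le> profile_gap \<alpha> (\<rho> * (\<alpha> + 1) * t) (- ln (u0 x))"
    if "tsh \<le> t" "x0fun \<alpha> \<rho> u0 t \<le> x" for t x
  proof -
    define L where "L = exp (1 - (\<rho> * (\<alpha> + 1) * t + 1) powr (1 / (\<alpha> + 1)))"
    have "K powr (\<alpha> + 1) \<le> \<rho> * (\<alpha> + 1) * t"
      using that(1) assms(1,2) by (simp add: tsh_def pos_divide_le_eq mult.commute)
    then have "K powr (\<alpha> + 1) < \<rho> * (\<alpha> + 1) * t + 1" by simp
    then have "(K powr (\<alpha> + 1)) powr (1 / (\<alpha> + 1)) < (\<rho> * (\<alpha> + 1) * t + 1) powr (1 / (\<alpha> + 1))"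
      using assms(1) by (intro powr_less_mono2) (auto simp: K_def)
    then have "K < (\<rho> * (\<alpha> + 1) * t + 1) powr (1 / (\<alpha> + 1))"
      using assms(1) by (simp add: powr_powr K_def)
    then have "1 - (\<rho> * (\<alpha> + 1) * t + 1) powr (1 / (\<alpha> + 1)) < ln (u0 X)"
      by (simp add: K_def)
    then have "L < exp (ln (u0 X))"
      unfolding L_def by (rule exp_less_mono)
    then have "L \<le> u0 X"
      using assms(3)[of X] by simp
    moreover have "Sup {y. u0 y = L} \<le> x"
      using that(2) by (simp add: x0fun_def L_def)
    ultimately have "X \<le> x" "u0 x \<le> L"
      using beyond_Sup_level_set[OF assms(4,5,6), of L] by (simp_all add: L_def)
    moreover have "0 \<le> \<rho> * (\<alpha> + 1) * t"
      using assms(1,2) \<open>tsh > 0\<close> that(1) by simp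
    ultimately show ?thesis
      using profile_gap_ge_one[OF assms(1) _ assms(3)] by (simp add: L_def)
  qed
  ultimately show ?thesis by blast
qed

theorem lemma3p1:
  fixes \<alpha> \<rho> \<xi>0 :: real and u0 :: "real \<Rightarrow> real"
  assumes alpha_pos: "\<alpha> > 0"
    and rho_pos: "\<rho> > 0"
    and range01: "\<forall>x. 0 \<le> u0 x \<and> u0 x \<le> 1"
    and unif: "uniformly_continuous_on UNIV u0"
    and pos: "\<forall>x. u0 x > 0"
    and liminf: "Liminf at_bot (\<lambda>x. ereal (u0 x)) > 0"
    and lim_top: "(u0 \<longlongrightarrow> 0) at_top"
    and xi0_pos: "\<xi>0 > 0"
    and C2: "\<exists>u1 u2. (\<forall>x \<ge> \<xi>0. (u0 has_real_derivative u1 x) (at x within {\<xi>0..})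
                              \<and> (u1 has_real_derivative u2 x) (at x within {\<xi>0..}))
                   \<and> continuous_on {\<xi>0..} u2"
    and noninc: "\<forall>x y. \<xi>0 \<le> x \<longrightarrow> x \<le> y \<longrightarrow> u0 y \<le> u0 x"
    and phi1: "deriv (\<lambda>x. - ln (u0 x)) \<in> o[at_top](\<lambda>x. (- ln (u0 x)) powr (- \<alpha>))"
    and phi2: "deriv (deriv (\<lambda>x. - ln (u0 x))) \<in> o[at_top](deriv (\<lambda>x. - ln (u0 x)))"
  shows "\<forall>\<epsilon>>0. \<exists>tsh>0. \<forall>t\<ge>tsh. \<forall>x\<ge>x0fun \<alpha> \<rho> u0 t.
           \<bar>deriv (deriv (\<lambda>y. wfun \<alpha> \<rho> u0 t y)) x\<bar>
             < \<epsilon> * wfun \<alpha> \<rho> u0 t x / (1 - ln (wfun \<alpha> \<rho> u0 t x)) powr \<alpha>"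
proof (intro allI impI)
  (* Locating x0(t) beyond X only uses u0 X > 0. *)
  fix \<epsilon> :: real assume "\<epsilon> > 0"
  define \<phi> where "\<phi> x = - ln (u0 x)" for x
  define K where "K = (1 + \<alpha>) * ((2 powr \<alpha>)\<^sup>2 + 2 powr \<alpha>)"
  define \<delta> where "\<delta> = min 1 (\<epsilon> / (2 * K))"
  have "K > 0" using alpha_pos by (simp add: K_def add_pos_pos)
  then have \<delta>: "0 < \<delta>" "\<delta> \<le> 1" "\<delta> * K < \<epsilon>"
    using \<open>\<epsilon> > 0\<close> by (auto simp: \<delta>_def min_def field_simps)
  obtain u1 u2 where "\<forall>x \<ge> \<xi>0. (u0 has_real_derivative u1 x) (at x within {\<xi>0..})
                              \<and> (u1 has_real_derivative u2 x) (at x within {\<xi>0..})"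
    using C2 by blast
  then have \<phi>_derivs: "(\<phi> has_real_derivative deriv \<phi> y) (at y)"
    "(deriv \<phi> has_real_derivative deriv (deriv \<phi>) y) (at y)" if "y \<in> {\<xi>0<..}" for y
    unfolding \<phi>_def[abs_def] using DERIV_deriv_neg_ln[of y "{\<xi>0..}" u0 u1 u2] that pos by auto
  obtain X where X: "\<And>y. X \<le> y \<Longrightarrow> \<xi>0 < y \<and> 1 \<le> \<phi> y \<and> \<bar>deriv \<phi> y\<bar> \<le> \<delta> * \<phi> y powr - \<alpha>
                                    \<and> \<bar>deriv (deriv \<phi>) y\<bar> \<le> \<delta> * \<bar>deriv \<phi> y\<bar>"
    using eventually_conj[OF eventually_gt_at_top[of \<xi>0]
        eventually_neg_ln_derivatives_small[OF _ lim_top \<delta>(1) phi1 phi2]] pos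
    unfolding \<phi>_def[abs_def] eventually_at_top_linorder by auto
  have "continuous_on {X..} u0"
    using uniformly_continuous_imp_continuous[OF unif] by (rule continuous_on_subset) simp
  moreover have "u0 z \<le> u0 y" if "X \<le> y" "y \<le> z" for y z
    using noninc X[of y] that by auto
  ultimately obtain tsh where tsh: "tsh > 0"
    "\<And>t x. tsh \<le> t \<Longrightarrow> x0fun \<alpha> \<rho> u0 t \<le> x
             \<Longrightarrow> X \<le> x \<and> 1 \<le> profile_gap \<alpha> (\<rho> * (\<alpha> + 1) * t) (\<phi> x)"
    using large_time_beyond_x0fun[OF alpha_pos rho_pos _ _ lim_top] pos
    unfolding \<phi>_def by metis
  show "\<exists>tsh>0. \<forall>t\<ge>tsh. \<forall>x\<ge>x0fun \<alpha> \<rho> u0 t.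
           \<bar>deriv (deriv (\<lambda>y. wfun \<alpha> \<rho> u0 t y)) x\<bar>
             < \<epsilon> * wfun \<alpha> \<rho> u0 t x / (1 - ln (wfun \<alpha> \<rho> u0 t x)) powr \<alpha>"
  proof (intro exI[of _ tsh] conjI allI impI tsh(1))
    fix t x assume "tsh \<le> t" "x0fun \<alpha> \<rho> u0 t \<le> x"
    then have gap: "1 \<le> profile_gap \<alpha> (\<rho> * (\<alpha> + 1) * t) (\<phi> x)" and "X \<le> x"
      using tsh(2) by blast+
    then have x: "x \<in> {\<xi>0<..}" "1 \<le> \<phi> x" "\<bar>deriv \<phi> x\<bar> \<le> \<delta> * \<phi> x powr - \<alpha>"
      "\<bar>deriv (deriv \<phi>) x\<bar> \<le> \<delta> * \<bar>deriv \<phi> x\<bar>"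
      using X by auto
    then show "\<bar>deriv (deriv (\<lambda>y. wfun \<alpha> \<rho> u0 t y)) x\<bar>
             < \<epsilon> * wfun \<alpha> \<rho> u0 t x / (1 - ln (wfun \<alpha> \<rho> u0 t x)) powr \<alpha>"
      using profile_comp_deriv_deriv_bound[OF alpha_pos open_greaterThan x(1) \<phi>_derivs(1)
            \<phi>_derivs(2)[OF x(1)] x(2) gap x(3,4) \<delta>(2) \<delta>(3)[unfolded K_def]]
      by (simp add: wfun_eq_profile \<phi>_def)
  qed
qed

end
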